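(* Let $G(x,y)=g(\rho(x,y))$ be the Green's function (fundamental solution) of the Paneitz operator $P_2$ on $\mathbb{H}^3$. Then $g(\rho)>0$ for all $\rho>0$, and $g$ is strictly monotonically decreasing in the geodesic distance $\rho\in(0,\infty)$.
   Context: $\mathbb{H}^3$ is 3-dimensional hyperbolic space with geodesic distance $\rho$ and Laplace–Beltrami operator $\Delta_{\mathbb{H}}$. $P_1=-\Delta_{\mathbb{H}}-\frac34$ and $P_2=P_1(P_1+2)$. The Green's function $G=P_2^{-1}$ is the (decaying) fundamental solution of $P_2$, which depends only on $\rho(x,y)$. *)

theory Defs
  imports "HOL-Analysis.Analysis"
begin

text \<open>For a function of the geodesic distance r from a fixed point, the
  Laplace-Beltrami operator acts as f'' + 2 coth(r) f', and the Riemannian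
  volume element is 4 pi sinh(r)^2 dr (times the sphere measure, already included).\<close>

definition hyp_radial_lap :: "(real \<Rightarrow> real) \<Rightarrow> real \<Rightarrow> real" where
  "hyp_radial_lap f r = deriv (deriv f) r + 2 * (cosh r / sinh r) * deriv f r"

definition P1_rad :: "(real \<Rightarrow> real) \<Rightarrow> real \<Rightarrow> real" where
  "P1_rad f r = - hyp_radial_lap f r - 3/4 * f r"

definition P2_rad :: "(real \<Rightarrow> real) \<Rightarrow> real \<Rightarrow> real" where
  "P2_rad f = P1_rad (\<lambda>r. P1_rad f r + 2 * f r)"

text \<open>Radial test functions: smooth, compactly supported functions on the
  hyperbolic space depending only on the distance to the base point, i.e.
  even smooth compactly supported functions of r.\<close>
definition radial_test :: "(real \<Rightarrow> real) \<Rightarrow> bool" where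
  "radial_test \<psi> \<longleftrightarrow>
     (\<forall>n x. ((deriv ^^ n) \<psi>) differentiable (at x)) \<and>
     (\<forall>r. \<psi> (- r) = \<psi> r) \<and>
     (\<exists>R. \<forall>r. R < \<bar>r\<bar> \<longrightarrow> \<psi> r = 0)"

text \<open>g is the radial profile of the Green's function G = P2^{-1}:
  G(x,y) = g(rho(x,y)) is continuous off the diagonal, solves
  P2 G(x,.) = delta_x in the sense of distributions (tested against radial
  test functions, which suffices since G(x,.) is radial about x), and is the
  decaying (L^2 at infinity) solution, i.e. the kernel of the bounded inverse.\<close>
definition is_P2_green_profile :: "(real \<Rightarrow> real) \<Rightarrow> bool" where
  "is_P2_green_profile g \<longleftrightarrow>
     continuous_on {0<..} g \<and>
     (\<forall>\<psi>. radial_test \<psi> \<longrightarrow>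
        (\<lambda>r. g r * P2_rad \<psi> r * (4 * pi * (sinh r)\<^sup>2)) absolutely_integrable_on {0<..} \<and>
        integral {0<..} (\<lambda>r. g r * P2_rad \<psi> r * (4 * pi * (sinh r)\<^sup>2)) = \<psi> 0) \<and>
     (\<lambda>r. (g r)\<^sup>2 * (sinh r)\<^sup>2) integrable_on {1..}"

end

theory Submission
  imports Defs "HOL-Computational_Algebra.Polynomial"
begin

(* For radial f, (Delta f) sinh r = (f sinh r)'' - f sinh r, so conjugation by sinh turns the radial
   Paneitz operator into the constant-coefficient operator (d^2 - 1/4)(d^2 - 9/4). Away from the pole
   u = g sinh is therefore a weak, hence classical, solution: a combination of exp(+-r/2) and
   exp(+-3r/2), and square integrability of G at infinity removes the growing exponentials. Testing
   P2 G = delta with radial bumps at the pole and integrating by parts against the two remaining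
   exponentials leaves only boundary terms at 0; they force u = (exp(-r/2) - exp(-3r/2)) / (8 pi),
   i.e. g r = 1 / (4 pi (exp(3r/2) + exp(r/2))), which is positive and strictly decreasing. *)

section \<open>Smooth functions of a real variable\<close>

definition smooth_upto :: "nat \<Rightarrow> real set \<Rightarrow> (real \<Rightarrow> real) \<Rightarrow> bool" where
  "smooth_upto n S f \<longleftrightarrow> (\<forall>k\<le>n. \<forall>x\<in>S. (deriv ^^ k) f differentiable (at x))"

definition smooth_on :: "real set \<Rightarrow> (real \<Rightarrow> real) \<Rightarrow> bool" where
  "smooth_on S f \<longleftrightarrow> (\<forall>n. smooth_upto n S f)"

lemma smooth_upto_0: "smooth_upto 0 S f \<longleftrightarrow> (\<forall>x\<in>S. f differentiable (at x))"
  by (simp add: smooth_upto_def)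

lemma smooth_upto_Suc:
  "smooth_upto (Suc n) S f \<longleftrightarrow> (\<forall>x\<in>S. f differentiable (at x)) \<and> smooth_upto n S (deriv f)"
proof -
  have "(\<forall>k\<le>Suc n. P k) \<longleftrightarrow> P 0 \<and> (\<forall>k\<le>n. P (Suc k))" for P :: "nat \<Rightarrow> bool"
    by (metis Suc_le_mono le0 not0_implies_Suc)
  then show ?thesis
    unfolding smooth_upto_def by (simp only: funpow_0 funpow_Suc_right o_apply)
qed

lemma smooth_upto_mono: "smooth_upto n S f \<Longrightarrow> m \<le> n \<Longrightarrow> smooth_upto m S f"
  unfolding smooth_upto_def by auto

lemma smooth_on_imp_smooth_upto: "smooth_on S f \<Longrightarrow> smooth_upto n S f"
  unfolding smooth_on_def by blast

lemma smooth_on_differentiable: "smooth_on S f \<Longrightarrow> x \<in> S \<Longrightarrow> f differentiable (at x)"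
  using smooth_upto_0 smooth_on_imp_smooth_upto by blast

lemma smooth_on_deriv: "smooth_on S f \<Longrightarrow> smooth_on S (deriv f)"
  unfolding smooth_on_def using smooth_upto_Suc by blast

lemma smooth_on_subset: "smooth_on T f \<Longrightarrow> S \<subseteq> T \<Longrightarrow> smooth_on S f"
  unfolding smooth_on_def smooth_upto_def by blast

lemma smooth_on_Un: "smooth_on S f \<Longrightarrow> smooth_on T f \<Longrightarrow> smooth_on (S \<union> T) f"
  by (auto simp: smooth_on_def smooth_upto_def)

lemma smooth_on_has_real_derivative:
  "smooth_on S f \<Longrightarrow> x \<in> S \<Longrightarrow> (f has_real_derivative deriv f x) (at x)"
  using smooth_on_differentiable DERIV_deriv_iff_real_differentiable by blast

lemma smooth_on_continuous_on: "smooth_on UNIV f \<Longrightarrow> continuous_on S f"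
  by (meson UNIV_I continuous_at_imp_continuous_on differentiable_imp_continuous_within
      smooth_on_differentiable)

lemma differentiable_cong_open:
  assumes "open S" "x \<in> S" "\<And>y. y \<in> S \<Longrightarrow> f y = g y" "f differentiable (at x)"
  shows "g differentiable (at x)"
  using assms has_derivative_transform_within_open unfolding differentiable_def by blast

lemma deriv_cong_open:
  assumes "open S" "x \<in> S" "\<And>y. y \<in> S \<Longrightarrow> f y = g y"
  shows "deriv f x = deriv g x"
  using eventually_nhds_in_open[OF assms(1,2)] assms(3)
  by (intro deriv_cong_ev) (auto elim: eventually_mono)

lemma higher_deriv_cong_open:
  assumes "open S" "x \<in> S" "\<And>y. y \<in> S \<Longrightarrow> f y = g y"
  shows "(deriv ^^ n) f x = (deriv ^^ n) g x"
  using eventually_nhds_in_open[OF assms(1,2)] assms(3)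
  by (intro higher_deriv_cong_ev) (auto elim: eventually_mono)

lemma smooth_upto_cong:
  assumes "open S" "\<And>x. x \<in> S \<Longrightarrow> f x = g x" "smooth_upto n S f"
  shows "smooth_upto n S g"
  using assms(2,3)
proof (induction n arbitrary: f g)
  case 0
  then show ?case
    using differentiable_cong_open[OF assms(1), of _ f g] by (auto simp: smooth_upto_0)
next
  case (Suc n)
  have "deriv f x = deriv g x" if "x \<in> S" for x
    using deriv_cong_open[OF assms(1) that Suc.prems(1)] .
  with Suc show ?case
    using differentiable_cong_open[OF assms(1), of _ f g] by (auto simp: smooth_upto_Suc)
qed

lemma smooth_on_cong:
  "open S \<Longrightarrow> (\<And>x. x \<in> S \<Longrightarrow> f x = g x) \<Longrightarrow> smooth_on S f \<Longrightarrow> smooth_on S g"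
  unfolding smooth_on_def using smooth_upto_cong by blast

lemma smooth_upto_const: "smooth_upto n S (\<lambda>x. c)"
proof (induction n arbitrary: c)
  case (Suc n)
  have "deriv (\<lambda>x. c) = (\<lambda>x. 0)"
    by (rule ext, rule DERIV_imp_deriv) simp
  with Suc show ?case by (simp add: smooth_upto_Suc)
qed (simp add: smooth_upto_0)

lemma smooth_upto_add:
  assumes "open S" "smooth_upto n S f" "smooth_upto n S g"
  shows "smooth_upto n S (\<lambda>x. f x + g x)"
  using assms(2,3)
proof (induction n arbitrary: f g)
  case (Suc n)
  then have "deriv f x + deriv g x = deriv (\<lambda>x. f x + g x) x" if "x \<in> S" for x
    using that DERIV_deriv_iff_real_differentiable
    by (intro DERIV_imp_deriv[symmetric] DERIV_add) (auto simp: smooth_upto_Suc)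
  moreover have "smooth_upto n S (\<lambda>x. deriv f x + deriv g x)"
    using Suc by (auto simp: smooth_upto_Suc)
  ultimately have "smooth_upto n S (deriv (\<lambda>x. f x + g x))"
    by (rule smooth_upto_cong[OF assms(1)])
  with Suc.prems show ?case
    by (auto simp: smooth_upto_Suc)
qed (simp add: smooth_upto_0)

lemma smooth_upto_mult:
  assumes "open S" "smooth_upto n S f" "smooth_upto n S g"
  shows "smooth_upto n S (\<lambda>x. f x * g x)"
  using assms(2,3)
proof (induction n arbitrary: f g)
  case (Suc n)
  have f: "smooth_upto n S f" "smooth_upto n S (deriv f)"
    using Suc.prems(1) smooth_upto_mono[OF Suc.prems(1)] by (auto simp: smooth_upto_Suc)
  have g: "smooth_upto n S g" "smooth_upto n S (deriv g)"
    using Suc.prems(2) smooth_upto_mono[OF Suc.prems(2)] by (auto simp: smooth_upto_Suc)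
  have "deriv f x * g x + f x * deriv g x = deriv (\<lambda>x. f x * g x) x" if "x \<in> S" for x
  proof -
    have "(f has_real_derivative deriv f x) (at x)" "(g has_real_derivative deriv g x) (at x)"
      using Suc.prems that DERIV_deriv_iff_real_differentiable by (auto simp: smooth_upto_Suc)
    then show ?thesis
      by (intro DERIV_imp_deriv[symmetric]) (auto intro!: derivative_eq_intros)
  qed
  moreover have "smooth_upto n S (\<lambda>x. deriv f x * g x + f x * deriv g x)"
    using Suc.IH f g by (intro smooth_upto_add[OF assms(1)]) auto
  ultimately have "smooth_upto n S (deriv (\<lambda>x. f x * g x))"
    by (rule smooth_upto_cong[OF assms(1)])
  with Suc.prems show ?case
    by (auto simp: smooth_upto_Suc)
qed (simp add: smooth_upto_0)

lemma smooth_upto_inverse: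
  assumes "open S" "smooth_on S g" "\<And>x. x \<in> S \<Longrightarrow> g x \<noteq> 0"
  shows "smooth_upto n S (\<lambda>x. inverse (g x))"
proof (induction n)
  case 0
  show ?case
    using assms smooth_on_differentiable by (auto simp: smooth_upto_0)
next
  case (Suc n)
  have "- deriv g x * (inverse (g x) * inverse (g x)) = deriv (\<lambda>x. inverse (g x)) x"
    if "x \<in> S" for x
    using assms that smooth_on_has_real_derivative
    by (intro DERIV_imp_deriv[symmetric]) (auto intro!: derivative_eq_intros)
  moreover have "smooth_upto n S (\<lambda>x. (- 1) * deriv g x * (inverse (g x) * inverse (g x)))"
    using Suc.IH smooth_on_imp_smooth_upto[OF smooth_on_deriv[OF assms(2)]]
    by (intro smooth_upto_mult[OF assms(1)] smooth_upto_const)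
  then have "smooth_upto n S (\<lambda>x. - deriv g x * (inverse (g x) * inverse (g x)))"
    by simp
  ultimately have "smooth_upto n S (deriv (\<lambda>x. inverse (g x)))"
    by (rule smooth_upto_cong[OF assms(1)])
  then show ?case
    using assms smooth_on_differentiable by (auto simp: smooth_upto_Suc)
qed

lemma smooth_on_const: "smooth_on S (\<lambda>x. c)"
  by (simp add: smooth_on_def smooth_upto_const)

lemma smooth_on_add:
  "open S \<Longrightarrow> smooth_on S f \<Longrightarrow> smooth_on S g \<Longrightarrow> smooth_on S (\<lambda>x. f x + g x)"
  by (simp add: smooth_on_def smooth_upto_add)

lemma smooth_on_mult:
  "open S \<Longrightarrow> smooth_on S f \<Longrightarrow> smooth_on S g \<Longrightarrow> smooth_on S (\<lambda>x. f x * g x)"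
  by (simp add: smooth_on_def smooth_upto_mult)

lemma smooth_on_cmult: "open S \<Longrightarrow> smooth_on S f \<Longrightarrow> smooth_on S (\<lambda>x. c * f x)"
  by (rule smooth_on_mult[OF _ smooth_on_const])

lemma smooth_on_diff:
  assumes "open S" "smooth_on S f" "smooth_on S g"
  shows "smooth_on S (\<lambda>x. f x - g x)"
  using smooth_on_add[OF assms(1,2) smooth_on_cmult[OF assms(1,3), of "- 1"]] by simp

lemma smooth_on_divide:
  assumes "open S" "smooth_on S f" "smooth_on S g" "\<And>x. x \<in> S \<Longrightarrow> g x \<noteq> 0"
  shows "smooth_on S (\<lambda>x. f x / g x)"
  unfolding divide_inverse
  using assms smooth_upto_inverse by (intro smooth_on_mult) (auto simp: smooth_on_def)

lemma smooth_on_sum: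
  assumes "open S" "\<And>i. i \<in> I \<Longrightarrow> smooth_on S (f i)"
  shows "smooth_on S (\<lambda>x. \<Sum>i\<in>I. f i x)"
  using assms(2)
proof (induction I rule: infinite_finite_induct)
  case (insert i I)
  then show ?case by (simp add: smooth_on_add[OF assms(1)])
qed (simp_all add: smooth_on_const)

lemma smooth_on_by_derivs:
  assumes "F 0 = f" "\<And>n x. (F n has_real_derivative F (Suc n) x) (at x)"
  shows "smooth_on S f"
proof -
  have "(deriv ^^ n) f = F n" for n
  proof (induction n)
    case (Suc n)
    have "deriv (F n) = F (Suc n)"
      using assms(2) by (simp add: fun_eq_iff DERIV_imp_deriv)
    with Suc show ?case
      by simp
  qed (use assms(1) in simp)
  then show ?thesis
    using assms(2) unfolding smooth_on_def smooth_upto_def real_differentiable_def by metis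
qed

lemma smooth_on_sinh: "smooth_on S sinh"
  by (rule smooth_on_by_derivs[where F = "\<lambda>n. if even n then sinh else cosh"])
     (auto intro!: derivative_eq_intros)

lemma smooth_on_ident: "smooth_on S (\<lambda>x. x)"
  by (rule smooth_on_by_derivs[where F = "\<lambda>n x. if n = 0 then x else if n = 1 then 1 else 0"])
     (auto intro!: derivative_eq_intros)

lemma smooth_on_compose_affine:
  assumes "smooth_on UNIV f"
  shows "smooth_on UNIV (\<lambda>x. f (a * x + b))"
proof (rule smooth_on_by_derivs[where F = "\<lambda>n x. a ^ n * (deriv ^^ n) f (a * x + b)"])
  fix n x
  have "smooth_on UNIV ((deriv ^^ n) f)"
    by (induction n) (use assms smooth_on_deriv in auto)
  then show "((\<lambda>x. a ^ n * (deriv ^^ n) f (a * x + b)) has_real_derivative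
      a ^ Suc n * (deriv ^^ Suc n) f (a * x + b)) (at x)"
    by (auto intro!: derivative_eq_intros DERIV_chain2[OF smooth_on_has_real_derivative])
qed simp

lemma smooth_on_reflect: "smooth_on UNIV f \<Longrightarrow> smooth_on UNIV (\<lambda>x. f (- x))"
  using smooth_on_compose_affine[of f "- 1" 0] by simp

lemma deriv_lincomb:
  assumes "smooth_on UNIV f" "smooth_on UNIV g"
  shows "deriv (\<lambda>x. a * f x + b * g x) = (\<lambda>x. a * deriv f x + b * deriv g x)"
  using smooth_on_has_real_derivative[OF assms(1)] smooth_on_has_real_derivative[OF assms(2)]
  by (intro ext DERIV_imp_deriv) (auto intro!: derivative_eq_intros)

lemma deriv_even_at_0:
  fixes f :: "real \<Rightarrow> real"
  assumes "\<And>x. f (- x) = f x" "f differentiable (at 0)"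
  shows "deriv f 0 = 0"
proof -
  have D: "(f has_real_derivative deriv f 0) (at 0)"
    using assms(2) DERIV_deriv_iff_real_differentiable by blast
  moreover have "((\<lambda>x. - x) has_real_derivative - 1) (at 0)"
    by (auto intro!: derivative_eq_intros)
  ultimately have "((\<lambda>x. f (- x)) has_real_derivative deriv f 0 * (- 1)) (at 0)"
    by (intro DERIV_chain2) simp_all
  then have "(f has_real_derivative - deriv f 0) (at 0)"
    using assms(1) by simp
  with D have "deriv f 0 = - deriv f 0"
    by (rule DERIV_unique)
  then show ?thesis
    by simp
qed

lemma mult_sinh_derivs_at_0:
  assumes \<psi>: "smooth_on UNIV \<psi>"
  shows "deriv (\<lambda>x. \<psi> x * sinh x) 0 = \<psi> 0"
    and "deriv (deriv (\<lambda>x. \<psi> x * sinh x)) 0 = 2 * deriv \<psi> 0"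
    and "deriv (deriv (deriv (\<lambda>x. \<psi> x * sinh x))) 0 = 3 * deriv (deriv \<psi>) 0 + \<psi> 0"
proof -
  have D: "(\<psi> has_real_derivative deriv \<psi> x) (at x)"
    "(deriv \<psi> has_real_derivative deriv (deriv \<psi>) x) (at x)"
    "(deriv (deriv \<psi>) has_real_derivative deriv (deriv (deriv \<psi>)) x) (at x)" for x
    using \<psi> by (auto intro!: smooth_on_has_real_derivative smooth_on_deriv)
  have d1: "deriv (\<lambda>x. \<psi> x * sinh x) = (\<lambda>x. deriv \<psi> x * sinh x + \<psi> x * cosh x)"
    using D by (intro ext DERIV_imp_deriv) (auto intro!: derivative_eq_intros)
  have d2: "deriv (deriv (\<lambda>x. \<psi> x * sinh x))
      = (\<lambda>x. deriv (deriv \<psi>) x * sinh x + 2 * (deriv \<psi> x * cosh x) + \<psi> x * sinh x)"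
    unfolding d1 using D by (intro ext DERIV_imp_deriv) (auto intro!: derivative_eq_intros)
  show "deriv (deriv (deriv (\<lambda>x. \<psi> x * sinh x))) 0 = 3 * deriv (deriv \<psi>) 0 + \<psi> 0"
    unfolding d2 using D by (intro DERIV_imp_deriv) (auto intro!: derivative_eq_intros)
  show "deriv (\<lambda>x. \<psi> x * sinh x) 0 = \<psi> 0"
    by (simp add: d1)
  show "deriv (deriv (\<lambda>x. \<psi> x * sinh x)) 0 = 2 * deriv \<psi> 0"
    by (simp only: d2) simp
qed

section \<open>Test functions\<close>

definition flat_fun :: "real \<Rightarrow> real" where
  "flat_fun x = (if 0 < x then exp (- 1 / x) else 0)"

fun flat_poly :: "nat \<Rightarrow> real poly" where
  "flat_poly 0 = 1"
| "flat_poly (Suc n) = [:0, 0, 1:] * (flat_poly n - pderiv (flat_poly n))"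

definition flat_fun_deriv :: "nat \<Rightarrow> real \<Rightarrow> real" where
  "flat_fun_deriv n x = (if 0 < x then poly (flat_poly n) (1 / x) * exp (- 1 / x) else 0)"

lemma poly_div_exp_tendsto_0: "((\<lambda>t. poly p t / exp t) \<longlongrightarrow> (0::real)) at_top"
proof -
  have "((\<lambda>t. \<Sum>i\<le>degree p. coeff p i * (t ^ i / exp t)) \<longlongrightarrow> (\<Sum>i\<le>degree p. coeff p i * 0)) at_top"
    by (intro tendsto_sum tendsto_mult tendsto_const tendsto_power_div_exp_0)
  then show ?thesis
    by (simp add: poly_altdef sum_divide_distrib)
qed

lemma has_real_derivative_flat_fun_deriv_0: "(flat_fun_deriv n has_real_derivative 0) (at 0)"
proof -
  have left: "((\<lambda>y. flat_fun_deriv n y / y) \<longlongrightarrow> 0) (at_left 0)"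
    by (rule tendsto_eventually)
       (auto simp: eventually_at_left_field flat_fun_deriv_def intro!: exI[of _ "- 1"])
  have "((\<lambda>y. poly (pCons 0 (flat_poly n)) (inverse y) / exp (inverse y)) \<longlongrightarrow> 0) (at_right 0)"
    by (rule filterlim_compose[OF poly_div_exp_tendsto_0 filterlim_inverse_at_top_right])
  then have right: "((\<lambda>y. flat_fun_deriv n y / y) \<longlongrightarrow> 0) (at_right 0)"
    by (rule Lim_transform_eventually)
       (auto simp: eventually_at_right_field flat_fun_deriv_def exp_minus field_simps
         intro!: exI[of _ 1])
  have "((\<lambda>y. flat_fun_deriv n y / y) \<longlongrightarrow> 0) (at 0)"
    by (rule filterlim_split_at[OF left right])
  then show ?thesis
    unfolding has_field_derivative_iff by (simp add: flat_fun_deriv_def)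
qed

lemma has_real_derivative_flat_fun_deriv:
  "(flat_fun_deriv n has_real_derivative flat_fun_deriv (Suc n) x) (at x)"
proof (cases x "0::real" rule: linorder_cases)
  case less
  have "eventually (\<lambda>y. 0 = flat_fun_deriv n y) (nhds x)"
    using eventually_nhds_in_open[of "{..<0}" x] less
    by (auto elim!: eventually_mono simp: flat_fun_deriv_def)
  then have "((\<lambda>_. 0) has_real_derivative 0) (at x) \<longleftrightarrow>
      (flat_fun_deriv n has_real_derivative 0) (at x)"
    by (rule DERIV_cong_ev[OF refl _ refl])
  moreover have "flat_fun_deriv (Suc n) x = 0"
    using less by (simp add: flat_fun_deriv_def)
  ultimately show ?thesis
    by simp
next
  case greater
  have ev: "eventually (\<lambda>y. poly (flat_poly n) (1 / y) * exp (- 1 / y) = flat_fun_deriv n y) (nhds x)"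
    using eventually_nhds_in_open[of "{0<..}" x] greater
    by (auto elim!: eventually_mono simp: flat_fun_deriv_def)
  have "((\<lambda>y. poly (flat_poly n) (1 / y) * exp (- 1 / y)) has_real_derivative
      poly (pderiv (flat_poly n)) (1 / x) * (- 1 / x ^ 2) * exp (- 1 / x)
        + poly (flat_poly n) (1 / x) * (exp (- 1 / x) * (1 / x ^ 2))) (at x)"
    using greater
    by (auto intro!: derivative_eq_intros DERIV_chain2[OF poly_DERIV]
        simp: power2_eq_square field_simps)
  moreover have "poly (pderiv (flat_poly n)) (1 / x) * (- 1 / x ^ 2) * exp (- 1 / x)
        + poly (flat_poly n) (1 / x) * (exp (- 1 / x) * (1 / x ^ 2)) = flat_fun_deriv (Suc n) x"
    using greater by (simp add: flat_fun_deriv_def algebra_simps power2_eq_square divide_simps)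
  ultimately show ?thesis
    using DERIV_cong_ev[OF refl ev refl] by simp
next
  case equal
  then show ?thesis
    using has_real_derivative_flat_fun_deriv_0 by (simp add: flat_fun_deriv_def)
qed

lemma smooth_on_flat_fun: "smooth_on S flat_fun"
proof (rule smooth_on_by_derivs[where F = flat_fun_deriv])
  show "flat_fun_deriv 0 = flat_fun"
    by (auto simp: fun_eq_iff flat_fun_deriv_def flat_fun_def)
qed (rule has_real_derivative_flat_fun_deriv)

definition bump :: "real \<Rightarrow> real \<Rightarrow> real \<Rightarrow> real" where
  "bump c e y = flat_fun (y - (c - e)) * flat_fun (c + e - y)"

lemma smooth_on_bump: "smooth_on UNIV (bump c e)"
proof -
  have "smooth_on UNIV (\<lambda>y. flat_fun (1 * y + (e - c)) * flat_fun ((- 1) * y + (c + e)))"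
    by (intro smooth_on_mult smooth_on_compose_affine smooth_on_flat_fun) simp
  then show ?thesis
    by (simp add: bump_def[abs_def] algebra_simps)
qed

lemma bump_nonneg: "0 \<le> bump c e y"
  by (simp add: bump_def flat_fun_def)

lemma bump_pos: "c - e < y \<Longrightarrow> y < c + e \<Longrightarrow> 0 < bump c e y"
  by (simp add: bump_def flat_fun_def)

definition supported_on :: "real \<Rightarrow> real \<Rightarrow> (real \<Rightarrow> real) \<Rightarrow> bool" where
  "supported_on a b f \<longleftrightarrow> (\<forall>x. x \<notin> {a..b} \<longrightarrow> f x = 0)"

lemma supported_on_bump: "supported_on (c - e) (c + e) (bump c e)"
  by (auto simp: supported_on_def bump_def flat_fun_def)

lemma supported_on_mono: "supported_on a b f \<Longrightarrow> A \<le> a \<Longrightarrow> b \<le> B \<Longrightarrow> supported_on A B f"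
  unfolding supported_on_def by auto

lemma supported_on_endpoints:
  assumes "smooth_on UNIV f" "supported_on a b f"
  shows "f a = 0" "f b = 0"
proof -
  have "isCont f a" "isCont f b"
    using assms(1) smooth_on_differentiable differentiable_imp_continuous_within by blast+
  then have "(f \<longlongrightarrow> f a) (at_left a)" "(f \<longlongrightarrow> f b) (at_right b)"
    by (simp_all add: isCont_def filterlim_at_split)
  moreover have "(f \<longlongrightarrow> 0) (at_left a)"
    using assms(2) unfolding supported_on_def
    by (intro tendsto_eventually) (auto simp: eventually_at_left_field intro!: exI[of _ "a - 1"])
  moreover have "(f \<longlongrightarrow> 0) (at_right b)"
    using assms(2) unfolding supported_on_def
    by (intro tendsto_eventually) (auto simp: eventually_at_right_field intro!: exI[of _ "b + 1"])
  ultimately show "f a = 0" "f b = 0"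
    by (simp_all add: tendsto_unique[OF trivial_limit_at_left_real]
        tendsto_unique[OF trivial_limit_at_right_real])
qed

lemma integral_greaterThan_eq_atLeastAtMost:
  fixes f :: "real \<Rightarrow> real"
  assumes "\<And>x. b < x \<Longrightarrow> f x = 0"
  shows "integral {a<..} f = integral {a..b} f"
proof -
  have "integral UNIV (\<lambda>x. if x \<in> {a<..} then f x else 0)
      = integral UNIV (\<lambda>x. if x \<in> {a..b} then f x else 0)"
    using assms by (intro integral_spike[of "{a}"]) auto
  then show ?thesis
    by (simp only: integral_restrict_UNIV)
qed

lemma integral_supported_on_superset:
  fixes f :: "real \<Rightarrow> real"
  assumes "continuous_on {a..b} f" "\<And>x. x \<notin> {a..b} \<Longrightarrow> f x = 0" "{a..b} \<subseteq> S"
  shows "integral S f = integral {a..b} f"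
proof -
  have "(f has_integral integral {a..b} f) {a..b}"
    using integrable_continuous_interval[OF assms(1)] by (rule integrable_integral)
  then have "(f has_integral integral {a..b} f) S"
    by (rule has_integral_on_superset) (use assms(2,3) in auto)
  then show ?thesis
    by (rule integral_unique)
qed

lemma vanishes_if_orthogonal_to_test_functions:
  fixes w :: "real \<Rightarrow> real"
  assumes "open S" "continuous_on S w"
    and orth: "\<And>p a b. smooth_on UNIV p \<Longrightarrow> supported_on a b p \<Longrightarrow> {a..b} \<subseteq> S \<Longrightarrow>
                 integral {a..b} (\<lambda>x. w x * p x) = 0"
    and "x0 \<in> S"
  shows "w x0 = 0"
proof (rule ccontr)
  assume "w x0 \<noteq> 0"
  define s where "s = sgn (w x0)"
  have "isCont w x0"
    using assms(1,2,4) continuous_on_eq_continuous_at by blast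
  then have "isCont (\<lambda>x. s * w x) x0"
    by (intro continuous_intros)
  moreover have "0 < s * w x0"
    using \<open>w x0 \<noteq> 0\<close> by (simp add: s_def sgn_mult_self_eq abs_sgn[symmetric] mult.commute)
  ultimately have "eventually (\<lambda>x. 0 < s * w x) (nhds x0)"
    unfolding eventually_nhds_conv_at isCont_def by (auto intro: order_tendstoD(1))
  then have "eventually (\<lambda>x. 0 < s * w x \<and> x \<in> S) (nhds x0)"
    using eventually_nhds_in_open[OF assms(1,4)] by (rule eventually_conj)
  then obtain d where "0 < d" and d: "\<And>x. dist x x0 < d \<Longrightarrow> 0 < s * w x \<and> x \<in> S"
    by (auto simp: eventually_nhds_metric)
  define e where "e = d / 2"
  have "0 < e" and x0: "x0 \<in> {x0 - e..x0 + e}"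
    using \<open>0 < d\<close> by (auto simp: e_def)
  have I: "{x0 - e..x0 + e} \<subseteq> S" "\<And>x. x \<in> {x0 - e..x0 + e} \<Longrightarrow> 0 < s * w x"
    using d \<open>0 < d\<close> by (auto simp: e_def dist_real_def)
  have "integral {x0 - e..x0 + e} (\<lambda>x. s * w x * bump x0 e x) = 0"
    using orth[OF smooth_on_bump supported_on_bump I(1)] by (simp add: mult.assoc)
  moreover have "continuous_on {x0 - e..x0 + e} (\<lambda>x. s * w x * bump x0 e x)"
    using continuous_on_subset[OF assms(2) I(1)] smooth_on_continuous_on[OF smooth_on_bump]
    by (intro continuous_intros)
  moreover have "0 \<le> s * w x * bump x0 e x" if "x \<in> {x0 - e..x0 + e}" for x
    by (meson I(2) that bump_nonneg less_imp_le mult_nonneg_nonneg)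
  ultimately have "s * w x0 * bump x0 e x0 = 0"
    using integral_eq_0_iff[of "x0 - e" "x0 + e"] \<open>0 < e\<close> x0 by auto
  moreover have "0 < s * w x0 * bump x0 e x0"
    using I(2)[OF x0] bump_pos[of x0 e x0] \<open>0 < e\<close> by simp
  ultimately show False
    by linarith
qed

section \<open>First-order operators and exponential moments\<close>

definition deriv_shift :: "real \<Rightarrow> (real \<Rightarrow> real) \<Rightarrow> real \<Rightarrow> real" where
  "deriv_shift m f x = deriv f x - m * f x"

fun deriv_shifts :: "real list \<Rightarrow> (real \<Rightarrow> real) \<Rightarrow> real \<Rightarrow> real" where
  "deriv_shifts [] f = f"
| "deriv_shifts (m # ms) f = deriv_shift m (deriv_shifts ms f)"

definition exp_moment :: "real \<Rightarrow> real \<Rightarrow> (real \<Rightarrow> real) \<Rightarrow> real \<Rightarrow> real" where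
  "exp_moment a b f v = integral {a..b} (\<lambda>x. f x * exp (v * x))"

lemma smooth_on_deriv_shift: "smooth_on UNIV f \<Longrightarrow> smooth_on UNIV (deriv_shift m f)"
  unfolding deriv_shift_def[abs_def]
  by (intro smooth_on_diff smooth_on_cmult smooth_on_deriv) auto

lemma supported_on_deriv_shift:
  assumes "supported_on a b f"
  shows "supported_on a b (deriv_shift m f)"
  unfolding supported_on_def
proof (intro allI impI)
  fix x
  assume x: "x \<notin> {a..b}"
  have "deriv f x = deriv (\<lambda>_. 0) x"
    by (rule deriv_cong_open[of "- {a..b}"]) (use assms x in \<open>auto simp: supported_on_def\<close>)
  then show "deriv_shift m f x = 0"
    using assms x by (simp add: supported_on_def deriv_shift_def)
qed

lemma smooth_on_deriv_shifts: "smooth_on UNIV f \<Longrightarrow> smooth_on UNIV (deriv_shifts ms f)"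
  by (induction ms) (auto intro: smooth_on_deriv_shift)

lemma supported_on_deriv_shifts: "supported_on a b f \<Longrightarrow> supported_on a b (deriv_shifts ms f)"
  by (induction ms) (auto intro: supported_on_deriv_shift)

lemma continuous_on_mult_exp:
  assumes "smooth_on UNIV f"
  shows "continuous_on S (\<lambda>x. f x * exp (v * x))"
  by (rule continuous_on_mult[OF smooth_on_continuous_on[OF assms]]) (intro continuous_intros)

lemma integral_deriv_shift_mult_exp:
  assumes "smooth_on UNIV f" "a \<le> b"
  shows "integral {a..b} (\<lambda>x. deriv_shift m f x * exp (v * x))
    = f b * exp (v * b) - f a * exp (v * a) - (v + m) * integral {a..b} (\<lambda>x. f x * exp (v * x))"
proof -
  have "((\<lambda>x. deriv_shift m f x * exp (v * x) + (v + m) * (f x * exp (v * x))) has_integral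
      f b * exp (v * b) - f a * exp (v * a)) {a..b}"
  proof (rule fundamental_theorem_of_calculus[OF assms(2)])
    fix x
    have "((\<lambda>x. f x * exp (v * x)) has_real_derivative
        deriv_shift m f x * exp (v * x) + (v + m) * (f x * exp (v * x))) (at x)"
      using smooth_on_has_real_derivative[OF assms(1)]
      by (auto intro!: derivative_eq_intros simp: deriv_shift_def algebra_simps)
    then show "((\<lambda>x. f x * exp (v * x)) has_vector_derivative
        deriv_shift m f x * exp (v * x) + (v + m) * (f x * exp (v * x))) (at x within {a..b})"
      by (simp add: has_real_derivative_iff_has_vector_derivative has_vector_derivative_at_within)
  qed
  moreover have "(\<lambda>x. f x * exp (v * x)) integrable_on {a..b}"
    by (intro integrable_continuous_interval continuous_on_mult_exp assms(1))
  then have "((\<lambda>x. (v + m) * (f x * exp (v * x))) has_integral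
      (v + m) * integral {a..b} (\<lambda>x. f x * exp (v * x))) {a..b}"
    by (intro has_integral_mult_right integrable_integral)
  ultimately have "((\<lambda>x. deriv_shift m f x * exp (v * x)) has_integral
      f b * exp (v * b) - f a * exp (v * a) - (v + m) * integral {a..b} (\<lambda>x. f x * exp (v * x)))
      {a..b}"
    by (auto dest: has_integral_diff)
  then show ?thesis
    by (rule integral_unique)
qed

lemma exp_moment_deriv_shift:
  assumes "smooth_on UNIV f" "supported_on a b f" "a \<le> b"
  shows "exp_moment a b (deriv_shift m f) v = - (v + m) * exp_moment a b f v"
  using integral_deriv_shift_mult_exp[OF assms(1,3), of m v] supported_on_endpoints[OF assms(1,2)]
  unfolding exp_moment_def by (simp add: algebra_simps)

lemma exp_moment_deriv_shifts:
  assumes "smooth_on UNIV f" "supported_on a b f" "a \<le> b"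
  shows "exp_moment a b (deriv_shifts ms f) v = (\<Prod>m\<leftarrow>ms. - (v + m)) * exp_moment a b f v"
  by (induction ms)
     (simp_all add: exp_moment_deriv_shift smooth_on_deriv_shifts supported_on_deriv_shifts assms)

lemma integral_diff_sum_cmult:
  fixes f :: "real \<Rightarrow> real"
  assumes "finite I" "f integrable_on S" "\<And>i. i \<in> I \<Longrightarrow> g i integrable_on S"
  shows "integral S (\<lambda>x. f x - (\<Sum>i\<in>I. c i * g i x)) = integral S f - (\<Sum>i\<in>I. c i * integral S (g i))"
proof -
  have "(\<lambda>x. \<Sum>i\<in>I. c i * g i x) integrable_on S"
    using assms(3) by (intro integrable_sum[OF assms(1)] integrable_on_mult_right)
  then show ?thesis
    using assms by (simp add: integral_diff integral_sum integrable_on_mult_right)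
qed

lemma exp_moment_supported_on_superset:
  assumes "smooth_on UNIV f" "supported_on a b f" "A \<le> a" "b \<le> B"
  shows "exp_moment A B f v = exp_moment a b f v"
  unfolding exp_moment_def using assms
  by (intro integral_supported_on_superset continuous_on_mult_exp) (auto simp: supported_on_def)

lemma exp_moment_diff_sum:
  assumes "smooth_on UNIV f" "\<And>i. smooth_on UNIV (g i)"
  shows "exp_moment a b (\<lambda>x. f x - (\<Sum>i\<in>I. c i * g i x)) v
    = exp_moment a b f v - (\<Sum>i\<in>I. c i * exp_moment a b (g i) v)"
proof (cases "finite I")
  case True
  have "(\<lambda>x. (f x - (\<Sum>i\<in>I. c i * g i x)) * exp (v * x))
      = (\<lambda>x. f x * exp (v * x) - (\<Sum>i\<in>I. c i * (g i x * exp (v * x))))"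
    by (simp add: fun_eq_iff left_diff_distrib sum_distrib_right mult.assoc)
  then show ?thesis
    unfolding exp_moment_def using True assms
    by (simp add: integral_diff_sum_cmult integrable_continuous_interval continuous_on_mult_exp)
qed (simp add: exp_moment_def)

lemma has_real_derivative_integral_from_below:
  fixes g :: "real \<Rightarrow> real"
  assumes "continuous_on UNIV g" "\<And>x. x < a \<Longrightarrow> g x = 0"
  shows "((\<lambda>y. integral {a - 1..y} g) has_real_derivative g x) (at x)"
proof (cases "x < a")
  case True
  have "integral {a - 1..y} g = 0" if "y < a" for y
    using assms(2) that by (subst integral_cong[of _ _ "\<lambda>_. 0"]) auto
  then have "eventually (\<lambda>y. 0 = integral {a - 1..y} g) (nhds x)"
    using eventually_nhds_in_open[of "{..<a}" x] True by (auto elim!: eventually_mono)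
  then have "((\<lambda>_. 0) has_real_derivative 0) (at x) \<longleftrightarrow>
      ((\<lambda>y. integral {a - 1..y} g) has_real_derivative 0) (at x)"
    by (rule DERIV_cong_ev[OF refl _ refl])
  then show ?thesis
    using assms(2) True by simp
next
  case False
  have "((\<lambda>y. integral {a - 1..y} g) has_real_derivative g x) (at x within {a - 1..x + 1})"
    using False by (intro integral_has_real_derivative continuous_on_subset[OF assms(1)]) auto
  moreover have "at x within {a - 1..x + 1} = at x"
    using False by (intro at_within_interior) simp
  ultimately show ?thesis
    by simp
qed

lemma smooth_on_ode_solution:
  assumes p: "\<And>x. (p has_real_derivative m * p x + c x) (at x)" and c: "smooth_on UNIV c"
  shows "smooth_on UNIV p"
proof -
  have deriv_p: "deriv p = (\<lambda>x. m * p x + c x)"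
    using p by (simp add: fun_eq_iff DERIV_imp_deriv)
  have "smooth_upto n UNIV p" for n
  proof (induction n)
    case 0
    show ?case
      using p by (auto simp: smooth_upto_0 real_differentiable_def)
  next
    case (Suc n)
    then have "smooth_upto n UNIV (\<lambda>x. m * p x + c x)"
      using smooth_on_imp_smooth_upto[OF c]
      by (intro smooth_upto_add smooth_upto_mult smooth_upto_const) auto
    then show ?case
      using p by (auto simp: smooth_upto_Suc deriv_p real_differentiable_def)
  qed
  then show ?thesis
    by (simp add: smooth_on_def)
qed

(* The solution vanishing left of the support of c is p x = exp (m x) * (integral of
   c t * exp (- m t) up to x); it vanishes right of the support iff the moment of c at - m does. *)
lemma deriv_shift_solvable:
  assumes c: "smooth_on UNIV c" "supported_on a b c" and moment: "exp_moment a b c (- m) = 0"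
  shows "\<exists>p. smooth_on UNIV p \<and> supported_on a b p \<and> deriv_shift m p = c"
proof -
  define g where "g x = c x * exp (- m * x)" for x
  define p where "p x = exp (m * x) * integral {a - 1..x} g" for x
  have g_cont: "continuous_on S g" for S
    using smooth_on_continuous_on[OF c(1)] unfolding g_def by (intro continuous_intros)
  have g_zero: "g x = 0" if "x \<notin> {a..b}" for x
    using c(2) that by (simp add: g_def supported_on_def)
  have p_deriv: "(p has_real_derivative m * p x + c x) (at x)" for x
  proof -
    have "exp (m * x) * g x = c x"
      by (simp add: g_def mult.left_commute flip: exp_add)
    with has_real_derivative_integral_from_below[OF g_cont, of a x] g_zero show ?thesis
      unfolding p_def by (auto intro!: derivative_eq_intros simp: algebra_simps)
  qed
  have "supported_on a b p"
    unfolding supported_on_def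
  proof (intro allI impI)
    fix x
    assume "x \<notin> {a..b}"
    then consider "x < a" | "b < x"
      by fastforce
    then show "p x = 0"
    proof cases
      case 1
      then have "integral {a - 1..x} g = 0"
        using g_zero by (subst integral_cong[of _ _ "\<lambda>_. 0"]) auto
      then show ?thesis
        by (simp add: p_def)
    next
      case 2
      then have "integral {a - 1..x} g = integral {a..b} g"
        using g_zero g_cont by (intro integral_supported_on_superset) auto
      also have "\<dots> = 0"
        using moment by (simp add: exp_moment_def g_def[abs_def])
      finally show ?thesis
        by (simp add: p_def)
    qed
  qed
  moreover have "deriv_shift m p = c"
    using DERIV_imp_deriv[OF p_deriv] by (simp add: fun_eq_iff deriv_shift_def)
  ultimately show ?thesis
    using smooth_on_ode_solution[OF p_deriv c(1)] by blast
qed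

lemma deriv_shifts_solvable:
  assumes "distinct ms" "smooth_on UNIV c" "supported_on a b c" "a \<le> b"
    and "\<And>m. m \<in> set ms \<Longrightarrow> exp_moment a b c (- m) = 0"
  shows "\<exists>p. smooth_on UNIV p \<and> supported_on a b p \<and> deriv_shifts ms p = c"
  using assms(1-3,5)
proof (induction ms arbitrary: c)
  case (Cons m ms)
  obtain y where y: "smooth_on UNIV y" "supported_on a b y" "deriv_shift m y = c"
    using deriv_shift_solvable[of c a b m] Cons.prems by auto
  have "exp_moment a b y (- m') = 0" if "m' \<in> set ms" for m'
    using exp_moment_deriv_shift[OF y(1,2) assms(4), of m "- m'"] Cons.prems(1,4) that y(3)
    by auto
  then obtain p where "smooth_on UNIV p" "supported_on a b p" "deriv_shifts ms p = y"
    using Cons.IH[OF _ y(1,2)] Cons.prems(1) by auto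
  with y(3) show ?case
    by auto
qed auto

lemma deriv_shift_deriv_shift:
  assumes "smooth_on UNIV f"
  shows "deriv_shift a (deriv_shift b f) = (\<lambda>x. deriv (deriv f) x - (a + b) * deriv f x + a * b * f x)"
proof -
  have "deriv (deriv_shift b f) x = deriv (deriv f) x - b * deriv f x" for x
    using smooth_on_has_real_derivative[OF assms] smooth_on_has_real_derivative[OF smooth_on_deriv[OF assms]]
    unfolding deriv_shift_def[abs_def]
    by (intro DERIV_imp_deriv) (auto intro!: derivative_eq_intros)
  then show ?thesis
    by (simp add: fun_eq_iff deriv_shift_def algebra_simps)
qed

lemma deriv_shifts_pairs:
  assumes "smooth_on UNIV f"
  shows "deriv_shifts [a, - a, b, - b] f
    = (\<lambda>x. (deriv ^^ 4) f x - (a\<^sup>2 + b\<^sup>2) * (deriv ^^ 2) f x + a\<^sup>2 * b\<^sup>2 * f x)"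
proof -
  define h where "h x = 1 * deriv (deriv f) x + (- b\<^sup>2) * f x" for x
  have f': "smooth_on UNIV (deriv f)" "smooth_on UNIV (deriv (deriv f))"
    "smooth_on UNIV (deriv (deriv (deriv f)))"
    using assms smooth_on_deriv by blast+
  have h: "smooth_on UNIV h"
    unfolding h_def[abs_def] by (intro smooth_on_add smooth_on_cmult f' assms) auto
  have "deriv_shifts [a, - a, b, - b] f = deriv_shift a (deriv_shift (- a) h)"
    unfolding h_def[abs_def] by (simp add: deriv_shift_deriv_shift assms power2_eq_square)
  also have "\<dots> = (\<lambda>x. deriv (deriv h) x - a\<^sup>2 * h x)"
    by (simp add: deriv_shift_deriv_shift[OF h] power2_eq_square)
  also have "deriv (deriv h) = (\<lambda>x. 1 * (deriv ^^ 4) f x + (- b\<^sup>2) * (deriv ^^ 2) f x)"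
    unfolding h_def[abs_def]
    by (simp only: deriv_lincomb f' assms) (simp add: numeral_eq_Suc)
  finally show ?thesis
    by (simp add: fun_eq_iff h_def numeral_eq_Suc algebra_simps)
qed

(* For v = - a the factor v + m of integral_deriv_shift_mult_exp vanishes at the outer factor
   deriv_shift a, so only the boundary term at 0 survives. *)
lemma integral_deriv_shifts_pair_mult_exp:
  assumes v: "smooth_on UNIV v" "supported_on c 1 v"
  shows "integral {0..1} (\<lambda>x. deriv_shifts [a, - a, b, - b] v x * exp (- a * x))
    = b\<^sup>2 * deriv v 0 - deriv (deriv (deriv v)) 0 - a * (deriv (deriv v) 0 - b\<^sup>2 * v 0)"
proof -
  define h where "h = (\<lambda>x. 1 * deriv (deriv v) x + (- b\<^sup>2) * v x)"
  define w where "w = deriv_shift (- a) h"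
  have h: "deriv_shifts [b, - b] v = h"
    by (simp add: h_def deriv_shift_deriv_shift v(1) power2_eq_square)
  then have w: "smooth_on UNIV w" "w 1 = 0"
    using smooth_on_deriv_shifts[OF v(1), of "[- a, b, - b]"]
      supported_on_endpoints(2)[OF _ supported_on_deriv_shifts[OF v(2), of "[- a, b, - b]"]]
    by (simp_all add: w_def)
  have "deriv h 0 = deriv (deriv (deriv v)) 0 - b\<^sup>2 * deriv v 0"
    unfolding h_def by (simp only: deriv_lincomb v(1) smooth_on_deriv)
  then have "w 0 = deriv (deriv (deriv v)) 0 - b\<^sup>2 * deriv v 0 + a * (deriv (deriv v) 0 - b\<^sup>2 * v 0)"
    by (simp add: w_def deriv_shift_def h_def)
  moreover have "deriv_shifts [a, - a, b, - b] v = deriv_shift a w"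
    using h by (simp add: w_def)
  ultimately show ?thesis
    using integral_deriv_shift_mult_exp[OF w(1), of 0 1 a "- a"] w(2) by simp
qed

section \<open>Weak solutions of constant-coefficient equations\<close>

lemma exp_moment_bump_neq_0:
  assumes "0 < e"
  shows "exp_moment (c - e) (c + e) (bump c e) v \<noteq> 0"
proof
  assume "exp_moment (c - e) (c + e) (bump c e) v = 0"
  moreover have "continuous_on {c - e..c + e} (\<lambda>x. bump c e x * exp (v * x))"
    by (rule continuous_on_mult_exp[OF smooth_on_bump])
  ultimately have "bump c e c * exp (v * c) = 0"
    using integral_eq_0_iff[of "c - e" "c + e" "\<lambda>x. bump c e x * exp (v * x)"] assms bump_nonneg
    by (simp add: exp_moment_def)
  then show False
    using bump_pos[of c e c] assms by simp
qed

lemma biorthogonal_test_functions: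
  assumes "distinct ms"
  obtains \<phi> where "\<And>m. smooth_on UNIV (\<phi> m)" "\<And>m. supported_on 1 2 (\<phi> m)"
    "\<And>m m'. m \<in> set ms \<Longrightarrow> m' \<in> set ms \<Longrightarrow> exp_moment 1 2 (\<phi> m) (- m') = 0 \<longleftrightarrow> m \<noteq> m'"
proof
  define \<beta> where "\<beta> = bump (3/2) (1/2)"
  have \<beta>: "smooth_on UNIV \<beta>" "supported_on 1 2 \<beta>" "exp_moment 1 2 \<beta> v \<noteq> 0" for v
    using smooth_on_bump supported_on_bump[of "3/2" "1/2"] exp_moment_bump_neq_0[of "1/2" "3/2"]
    by (simp_all add: \<beta>_def)
  show "smooth_on UNIV (deriv_shifts (remove1 m ms) \<beta>)" for m
    using \<beta>(1) by (rule smooth_on_deriv_shifts)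
  show "supported_on 1 2 (deriv_shifts (remove1 m ms) \<beta>)" for m
    using \<beta>(2) by (rule supported_on_deriv_shifts)
  fix m m'
  assume "m \<in> set ms" "m' \<in> set ms"
  then have "m' \<in> set (remove1 m ms) \<longleftrightarrow> m \<noteq> m'"
    using assms by (auto simp: set_remove1_eq)
  then show "exp_moment 1 2 (deriv_shifts (remove1 m ms) \<beta>) (- m') = 0 \<longleftrightarrow> m \<noteq> m'"
    using \<beta> by (auto simp: exp_moment_deriv_shifts prod_list_zero_iff)
qed

lemma weak_solution_annihilates_moment_free:
  assumes "distinct ms"
    and weak: "\<And>p a b. smooth_on UNIV p \<Longrightarrow> supported_on a b p \<Longrightarrow> 0 < a \<Longrightarrow> a \<le> b \<Longrightarrow>
                 integral {a..b} (\<lambda>x. u x * deriv_shifts ms p x) = 0"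
    and q: "smooth_on UNIV q" "supported_on a b q" "0 < a" "a \<le> b"
      "\<And>m. m \<in> set ms \<Longrightarrow> exp_moment a b q (- m) = 0"
  shows "integral {a..b} (\<lambda>x. u x * q x) = 0"
proof -
  obtain p where "smooth_on UNIV p" "supported_on a b p" "deriv_shifts ms p = q"
    using deriv_shifts_solvable[OF assms(1) q(1,2,4,5)] by blast
  with weak[of p a b] q(3,4) show ?thesis
    by simp
qed

(* Subtracting from p its components along the biorthogonal system \<phi> leaves a test function
   with vanishing moments, which the weak solution u annihilates. *)
lemma weak_solution_integral_eq_exp_moments:
  fixes u :: "real \<Rightarrow> real"
  assumes "distinct ms" and u: "continuous_on {0<..} u"
    and weak: "\<And>p a b. smooth_on UNIV p \<Longrightarrow> supported_on a b p \<Longrightarrow> 0 < a \<Longrightarrow> a \<le> b \<Longrightarrow>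
                 integral {a..b} (\<lambda>x. u x * deriv_shifts ms p x) = 0"
    and \<phi>: "\<And>m. smooth_on UNIV (\<phi> m)" "\<And>m. supported_on 1 2 (\<phi> m)"
      "\<And>m m'. m \<in> set ms \<Longrightarrow> m' \<in> set ms \<Longrightarrow> exp_moment 1 2 (\<phi> m) (- m') = 0 \<longleftrightarrow> m \<noteq> m'"
    and p: "smooth_on UNIV p" "supported_on A B p" and AB: "0 < A" "A \<le> 1" "2 \<le> B"
  shows "integral {A..B} (\<lambda>x. u x * p x) = (\<Sum>m\<in>set ms.
    integral {1..2} (\<lambda>x. u x * \<phi> m x) / exp_moment 1 2 (\<phi> m) (- m) * exp_moment A B p (- m))"
proof -
  define N where "N m = exp_moment 1 2 (\<phi> m) (- m)" for m
  define k where "k m = exp_moment A B p (- m) / N m" for m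
  define q where "q x = p x - (\<Sum>m\<in>set ms. k m * \<phi> m x)" for x
  have N: "N m \<noteq> 0" if "m \<in> set ms" for m
    using \<phi>(3)[OF that that] by (simp add: N_def)
  have uf: "continuous_on {A..B} (\<lambda>x. u x * f x)" if "smooth_on UNIV f" for f
    using AB(1) smooth_on_continuous_on[OF that]
    by (intro continuous_on_mult continuous_on_subset[OF u]) auto
  have \<phi>_AB: "supported_on A B (\<phi> m)" for m
    using supported_on_mono[OF \<phi>(2) AB(2,3)] .
  have "smooth_on UNIV q"
    unfolding q_def[abs_def] using p \<phi> by (intro smooth_on_diff smooth_on_sum smooth_on_cmult) auto
  moreover have "supported_on A B q"
    using p(2) \<phi>_AB by (simp add: q_def supported_on_def)
  moreover have "exp_moment A B q (- m') = 0" if "m' \<in> set ms" for m'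
  proof -
    have "exp_moment A B q (- m')
        = exp_moment A B p (- m') - (\<Sum>m\<in>set ms. k m * exp_moment 1 2 (\<phi> m) (- m'))"
      unfolding q_def[abs_def]
      using exp_moment_supported_on_superset[OF \<phi>(1,2) AB(2,3)] p(1) \<phi>(1)
      by (simp add: exp_moment_diff_sum)
    also have "(\<Sum>m\<in>set ms. k m * exp_moment 1 2 (\<phi> m) (- m'))
        = (\<Sum>m\<in>set ms. if m = m' then k m * N m else 0)"
      using \<phi>(3) that by (intro sum.cong) (auto simp: N_def)
    finally show ?thesis
      using that N[OF that] by (simp add: k_def)
  qed
  ultimately have "integral {A..B} (\<lambda>x. u x * q x) = 0"
    using AB by (intro weak_solution_annihilates_moment_free[OF assms(1) weak]) auto
  moreover have "integral {A..B} (\<lambda>x. u x * q x)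
      = integral {A..B} (\<lambda>x. u x * p x) - (\<Sum>m\<in>set ms. k m * integral {A..B} (\<lambda>x. u x * \<phi> m x))"
    unfolding q_def right_diff_distrib sum_distrib_left mult.left_commute[of "u _"]
    by (intro integral_diff_sum_cmult integrable_continuous_interval uf p(1) \<phi>(1)) auto
  moreover have "integral {A..B} (\<lambda>x. u x * \<phi> m x) = integral {1..2} (\<lambda>x. u x * \<phi> m x)" for m
    using \<phi>(2)[of m] AB continuous_on_subset[OF uf[OF \<phi>(1)], of "{1..2}"]
    by (intro integral_supported_on_superset) (auto simp: supported_on_def)
  ultimately show ?thesis
    using N by (simp add: k_def N_def mult.commute cong: sum.cong)
qed

theorem weak_solution_deriv_shifts_is_exp_sum:
  fixes u :: "real \<Rightarrow> real"
  assumes "distinct ms" and u: "continuous_on {0<..} u"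
    and weak: "\<And>p a b. smooth_on UNIV p \<Longrightarrow> supported_on a b p \<Longrightarrow> 0 < a \<Longrightarrow> a \<le> b \<Longrightarrow>
                 integral {a..b} (\<lambda>x. u x * deriv_shifts ms p x) = 0"
  obtains C where "\<And>x. 0 < x \<Longrightarrow> u x = (\<Sum>m\<in>set ms. C m * exp (- m * x))"
proof -
  obtain \<phi> where \<phi>: "\<And>m. smooth_on UNIV (\<phi> m)" "\<And>m. supported_on 1 2 (\<phi> m)"
    "\<And>m m'. m \<in> set ms \<Longrightarrow> m' \<in> set ms \<Longrightarrow> exp_moment 1 2 (\<phi> m) (- m') = 0 \<longleftrightarrow> m \<noteq> m'"
    using biorthogonal_test_functions[OF assms(1)] by blast
  define C where "C m = integral {1..2} (\<lambda>x. u x * \<phi> m x) / exp_moment 1 2 (\<phi> m) (- m)" for m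
  define w where "w = (\<lambda>x. u x - (\<Sum>m\<in>set ms. C m * exp (- m * x)))"
  have "w x = 0" if "0 < x" for x
  proof (rule vanishes_if_orthogonal_to_test_functions[where S = "{0<..}" and w = w])
    show w_cont: "continuous_on {0<..} w"
      unfolding w_def by (intro continuous_intros u)
    fix p a b
    assume p: "smooth_on UNIV p" "supported_on a b p" "{a..b} \<subseteq> {0<..}"
    show "integral {a..b} (\<lambda>x. w x * p x) = 0"
    proof (cases "a \<le> b")
      case True
      define A B where "A = min a 1" and "B = max b 2"
      have AB: "0 < A" "A \<le> 1" "2 \<le> B" "A \<le> a" "b \<le> B"
        using p(3) True by (auto simp: A_def B_def)
      have wp: "(\<lambda>x. w x * p x)
          = (\<lambda>x. u x * p x - (\<Sum>m\<in>set ms. C m * (p x * exp (- m * x))))"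
        by (simp add: w_def fun_eq_iff left_diff_distrib sum_distrib_right mult.assoc
            mult.commute[of "exp _"])
      have u_cont: "continuous_on {A..B} u"
        using AB(1) by (intro continuous_on_subset[OF u]) auto
      have "integral {a..b} (\<lambda>x. w x * p x) = integral {A..B} (\<lambda>x. w x * p x)"
        using continuous_on_subset[OF w_cont p(3)] smooth_on_continuous_on[OF p(1)] p(2) AB
        by (intro integral_supported_on_superset[symmetric] continuous_on_mult)
           (auto simp: supported_on_def)
      also have "\<dots> = integral {A..B} (\<lambda>x. u x * p x) - (\<Sum>m\<in>set ms. C m * exp_moment A B p (- m))"
        using u_cont smooth_on_continuous_on[OF p(1)] unfolding wp exp_moment_def
        by (intro integral_diff_sum_cmult integrable_continuous_interval continuous_on_mult_exp
            continuous_on_mult p(1)) auto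
      also have "\<dots> = 0"
        using weak_solution_integral_eq_exp_moments[OF assms \<phi> p(1) supported_on_mono[OF p(2) AB(4,5)]
            AB(1-3)]
        by (simp add: C_def)
      finally show ?thesis .
    qed simp
  qed (use that in auto)
  then show ?thesis
    using that by (auto simp: w_def)
qed

section \<open>Square-integrable exponential sums\<close>

lemma tendsto_exp_neg_mult_at_top:
  fixes k :: real
  assumes "0 < k"
  shows "((\<lambda>r. exp (- k * r)) \<longlongrightarrow> 0) at_top"
proof -
  have "filterlim (\<lambda>r. k * r) at_top at_top"
    by (rule filterlim_tendsto_pos_mult_at_top[OF tendsto_const assms filterlim_ident])
  then have "filterlim (\<lambda>r. - k * r) at_bot at_top"
    by (simp add: filterlim_uminus_at_bot)
  then show ?thesis
    by (rule filterlim_compose[OF exp_at_bot])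
qed

lemma nonneg_integrable_not_eventually_ge:
  fixes f :: "real \<Rightarrow> real"
  assumes "continuous_on {1..} f" "f integrable_on {1..}" "\<And>x. 1 \<le> x \<Longrightarrow> 0 \<le> f x"
    and "0 < e" "\<And>r. N \<le> r \<Longrightarrow> e \<le> f r"
  shows False
proof -
  define M where "M = max N 1"
  define K where "K = (\<bar>integral {1..} f\<bar> + 1) / e"
  have "0 < K"
    using assms(4) by (simp add: K_def)
  have int: "f integrable_on {M..M + K}"
    using assms(1) by (intro integrable_continuous_interval continuous_on_subset[OF assms(1)])
      (auto simp: M_def)
  have "K * e \<le> integral {M..M + K} f"
    using integral_le[OF integrable_const_ivl[of e M "M + K"] int] assms(5) \<open>0 < K\<close>
    by (auto simp: M_def content_real)
  also have "\<dots> \<le> integral {1..} f"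
    using assms(3) by (intro integral_subset_le[OF _ int assms(2)]) (auto simp: M_def)
  finally show False
    using assms(4) by (simp add: K_def)
qed

lemma square_integrable_exp_limit_0:
  fixes U :: "real \<Rightarrow> real"
  assumes U: "continuous_on {1..} U" "(\<lambda>r. (U r)\<^sup>2) integrable_on {1..}"
    and "0 \<le> k" and lim: "((\<lambda>r. U r * exp (- k * r)) \<longlongrightarrow> c) at_top"
  shows "c = 0"
proof (rule ccontr)
  assume "c \<noteq> 0"
  then have "eventually (\<lambda>r. dist (U r * exp (- k * r)) c < \<bar>c\<bar> / 2) at_top"
    by (intro tendstoD[OF lim]) simp
  then obtain N where N: "\<And>r. N \<le> r \<Longrightarrow> \<bar>U r * exp (- k * r) - c\<bar> < \<bar>c\<bar> / 2"
    by (auto simp: eventually_at_top_linorder dist_real_def)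
  define M where "M = max N 0"
  have bound: "c\<^sup>2 / 4 \<le> (U r)\<^sup>2" if "M \<le> r" for r
  proof -
    have "\<bar>c\<bar> / 2 \<le> \<bar>U r * exp (- k * r)\<bar>"
      using N[of r] that unfolding M_def by linarith
    also have "\<dots> \<le> \<bar>U r\<bar>"
      using \<open>0 \<le> k\<close> that by (simp add: M_def abs_mult mult_left_le)
    finally have "(\<bar>c\<bar> / 2)\<^sup>2 \<le> \<bar>U r\<bar>\<^sup>2"
      by (rule power_mono) simp
    then show ?thesis
      by (simp add: power_divide)
  qed
  have "continuous_on {1..} (\<lambda>r. (U r)\<^sup>2)"
    using U(1) by (intro continuous_intros)
  then show False
    by (rule nonneg_integrable_not_eventually_ge[OF _ U(2) _ _ bound]) (use \<open>c \<noteq> 0\<close> in auto)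
qed

section \<open>The radial Paneitz operator\<close>

(* sinh * P2 * (1 / sinh) on radial functions, i.e. (d^2 - 1/4)(d^2 - 9/4); see P2_rad_mult_sinh. *)
definition P2_conj :: "(real \<Rightarrow> real) \<Rightarrow> real \<Rightarrow> real" where
  "P2_conj = deriv_shifts [1/2, -1/2, 3/2, -3/2]"

lemma P2_conj_eq:
  assumes "smooth_on UNIV f"
  shows "P2_conj f = (\<lambda>x. (deriv ^^ 4) f x - 5/2 * (deriv ^^ 2) f x + 9/16 * f x)"
  using deriv_shifts_pairs[OF assms, of "1/2" "3/2"] by (simp add: P2_conj_def power2_eq_square)

lemma P2_conj_factors_swapped:
  assumes "smooth_on UNIV f"
  shows "P2_conj f = deriv_shifts [3/2, -3/2, 1/2, -1/2] f"
  using deriv_shifts_pairs[OF assms, of "3/2" "1/2"] by (simp add: P2_conj_eq[OF assms] power2_eq_square)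

lemma P2_conj_cong_open:
  assumes "smooth_on UNIV f" "smooth_on UNIV g" "open S" "x \<in> S" "\<And>y. y \<in> S \<Longrightarrow> f y = g y"
  shows "P2_conj f x = P2_conj g x"
  using higher_deriv_cong_open[OF assms(3-5)] assms(4,5)
  by (simp add: P2_conj_eq assms(1,2))

lemma P1_rad_mult_sinh:
  assumes "open S" "smooth_on S f" "x \<in> S" "0 < x"
  shows "P1_rad f x * sinh x = - deriv (deriv (\<lambda>y. f y * sinh y)) x + 1/4 * (f x * sinh x)"
proof -
  have f': "(f has_real_derivative deriv f y) (at y)" "(deriv f has_real_derivative deriv (deriv f) y) (at y)"
    if "y \<in> S" for y
    using that smooth_on_has_real_derivative assms(2) smooth_on_deriv by blast+
  have "deriv (\<lambda>y. f y * sinh y) y = deriv f y * sinh y + f y * cosh y" if "y \<in> S" for y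
    using f'(1)[OF that] by (intro DERIV_imp_deriv) (auto intro!: derivative_eq_intros)
  then have "deriv (deriv (\<lambda>y. f y * sinh y)) x = deriv (\<lambda>y. deriv f y * sinh y + f y * cosh y) x"
    by (rule deriv_cong_open[OF assms(1,3)])
  also have "\<dots> = deriv (deriv f) x * sinh x + 2 * deriv f x * cosh x + f x * sinh x"
    using f'[OF assms(3)] by (intro DERIV_imp_deriv) (auto intro!: derivative_eq_intros)
  finally show ?thesis
    using assms(4) by (simp add: P1_rad_def hyp_radial_lap_def field_simps)
qed

lemma P2_rad_mult_sinh:
  assumes \<psi>: "smooth_on UNIV \<psi>" and "0 < r"
  shows "P2_rad \<psi> r * sinh r = P2_conj (\<lambda>x. \<psi> x * sinh x) r"
proof -
  define S :: "real set" where "S = {0<..}"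
  define v where "v = (\<lambda>x. \<psi> x * sinh x)"
  define F where "F = (\<lambda>r. P1_rad \<psi> r + 2 * \<psi> r)"
  define G where "G x = (- 1) * deriv (deriv v) x + 9/4 * v x" for x
  have S: "open S" "r \<in> S"
    using \<open>0 < r\<close> by (auto simp: S_def)
  have v: "smooth_on UNIV v" "smooth_on UNIV (deriv v)" "smooth_on UNIV (deriv (deriv v))"
    "smooth_on UNIV (deriv (deriv (deriv v)))"
    unfolding v_def using \<psi> smooth_on_sinh
    by (auto intro!: smooth_on_deriv smooth_on_mult)
  have FG: "F y * sinh y = G y" if "y \<in> S" for y
    using P1_rad_mult_sinh[OF S(1) smooth_on_subset[OF \<psi>] that] that
    by (simp add: S_def F_def G_def v_def algebra_simps)
  have G_sinh: "smooth_on S (\<lambda>y. G y / sinh y)"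
    unfolding G_def[abs_def] using v S(1)
    by (intro smooth_on_divide smooth_on_add smooth_on_cmult smooth_on_sinh)
       (auto simp: S_def intro: smooth_on_subset)
  have F: "smooth_on S F"
    by (rule smooth_on_cong[OF S(1) _ G_sinh]) (use FG in \<open>auto simp: S_def field_simps\<close>)
  have "deriv (deriv (\<lambda>y. F y * sinh y)) r = deriv (deriv G) r"
    using higher_deriv_cong_open[OF S FG, where n = 2] by (simp add: numeral_eq_Suc)
  also have "deriv (deriv G) = (\<lambda>x. (- 1) * (deriv ^^ 4) v x + 9/4 * (deriv ^^ 2) v x)"
    unfolding G_def[abs_def] by (simp only: deriv_lincomb v) (simp add: numeral_eq_Suc)
  finally have "P1_rad F r * sinh r = (deriv ^^ 4) v r - 9/4 * (deriv ^^ 2) v r + 1/4 * G r"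
    using P1_rad_mult_sinh[OF S(1) F S(2) \<open>0 < r\<close>] FG[OF S(2)] by simp
  moreover have "P2_rad \<psi> = P1_rad F"
    by (simp add: P2_rad_def F_def)
  moreover have "P2_conj v r = (deriv ^^ 4) v r - 5/2 * deriv (deriv v) r + 9/16 * v r"
    by (simp add: P2_conj_eq[OF v(1)] numeral_2_eq_2)
  ultimately show ?thesis
    unfolding v_def[symmetric] by (simp add: G_def numeral_2_eq_2 field_simps)
qed

lemma radial_test_iff:
  "radial_test \<psi> \<longleftrightarrow>
    smooth_on UNIV \<psi> \<and> (\<forall>r. \<psi> (- r) = \<psi> r) \<and> (\<exists>R. \<forall>r. R < \<bar>r\<bar> \<longrightarrow> \<psi> r = 0)"
  by (auto simp: radial_test_def smooth_on_def smooth_upto_def)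

lemma radial_test_odd_quotient:
  assumes p: "smooth_on UNIV p" "supported_on a b p" "0 < a"
  shows "radial_test (\<lambda>r. (p r - p (- r)) / sinh r)"
proof -
  define \<psi> where "\<psi> = (\<lambda>r. (p r - p (- r)) / sinh r)"
  have "smooth_on (- {0}) \<psi>"
    unfolding \<psi>_def using p(1) smooth_on_reflect[OF p(1)]
    by (intro smooth_on_divide smooth_on_diff) (auto intro: smooth_on_subset smooth_on_sinh)
  moreover have "smooth_on {- a<..<a} \<psi>"
    by (rule smooth_on_cong[OF _ _ smooth_on_const[of _ 0]])
       (use p(2,3) in \<open>auto simp: \<psi>_def supported_on_def\<close>)
  moreover have "- {0} \<union> {- a<..<a} = UNIV"
    using p(3) by auto
  ultimately have "smooth_on UNIV \<psi>"
    by (metis smooth_on_Un)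
  moreover have "\<psi> (- r) = \<psi> r" for r
    by (simp add: \<psi>_def divide_minus_right flip: divide_minus_left)
  moreover have "\<psi> r = 0" if "\<bar>a\<bar> + \<bar>b\<bar> < \<bar>r\<bar>" for r
  proof -
    have "r \<notin> {a..b}" "- r \<notin> {a..b}"
      using p(3) that by (cases "0 \<le> r"; auto)+
    then show ?thesis
      using p(2) by (simp add: \<psi>_def supported_on_def)
  qed
  ultimately show ?thesis
    unfolding radial_test_iff \<psi>_def[symmetric] by blast
qed

section \<open>The Green's function\<close>

(* Tested against the radial function \<psi> with \<psi> r * sinh r = p r for r > 0. *)
lemma green_profile_weak_equation:
  assumes G: "is_P2_green_profile g" and p: "smooth_on UNIV p" "supported_on a b p" "0 < a"
  shows "integral {a..b} (\<lambda>x. g x * sinh x * P2_conj p x) = 0"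
proof -
  define \<psi> where "\<psi> = (\<lambda>r. (p r - p (- r)) / sinh r)"
  have \<psi>: "radial_test \<psi>"
    unfolding \<psi>_def by (rule radial_test_odd_quotient[OF p])
  then have \<psi>_sinh: "smooth_on UNIV (\<lambda>x. \<psi> x * sinh x)"
    by (auto simp: radial_test_iff intro: smooth_on_mult smooth_on_sinh)
  have pointwise: "g r * P2_rad \<psi> r * (4 * pi * (sinh r)\<^sup>2) = 4 * pi * (g r * sinh r * P2_conj p r)"
    if "r \<in> {0<..}" for r
  proof -
    have "P2_rad \<psi> r * sinh r = P2_conj (\<lambda>x. \<psi> x * sinh x) r"
      using \<psi> that by (intro P2_rad_mult_sinh) (auto simp: radial_test_iff)
    also have "\<dots> = P2_conj p r"
      by (rule P2_conj_cong_open[OF \<psi>_sinh p(1), of "{0<..}"])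
         (use that p(2,3) in \<open>auto simp: \<psi>_def supported_on_def\<close>)
    finally show ?thesis
      by (simp add: power2_eq_square algebra_simps)
  qed
  have "continuous_on {a..b} g"
    using G p(3) by (auto simp: is_P2_green_profile_def intro: continuous_on_subset)
  moreover have "continuous_on {a..b} (P2_conj p)"
    unfolding P2_conj_def by (intro smooth_on_continuous_on smooth_on_deriv_shifts p(1))
  ultimately have "continuous_on {a..b} (\<lambda>r. 4 * pi * (g r * sinh r * P2_conj p r))"
    by (intro continuous_intros)
  moreover have "P2_conj p r = 0" if "r \<notin> {a..b}" for r
    using supported_on_deriv_shifts[OF p(2)] that unfolding P2_conj_def supported_on_def by blast
  ultimately have support: "integral {0<..} (\<lambda>r. 4 * pi * (g r * sinh r * P2_conj p r))
      = integral {a..b} (\<lambda>r. 4 * pi * (g r * sinh r * P2_conj p r))"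
    using p(3) by (intro integral_supported_on_superset) auto
  have "0 = integral {0<..} (\<lambda>r. g r * P2_rad \<psi> r * (4 * pi * (sinh r)\<^sup>2))"
    using G \<psi> by (simp add: is_P2_green_profile_def \<psi>_def)
  also have "\<dots> = integral {0<..} (\<lambda>r. 4 * pi * (g r * sinh r * P2_conj p r))"
    by (rule integral_cong) (rule pointwise)
  also have "\<dots> = 4 * pi * integral {a..b} (\<lambda>x. g x * sinh x * P2_conj p x)"
    unfolding support by simp
  finally show ?thesis
    by simp
qed

lemma green_profile_exp_sum:
  assumes "is_P2_green_profile g"
  obtains C where "\<And>x. 0 < x \<Longrightarrow> g x * sinh x = (\<Sum>m\<in>{1/2, -1/2, 3/2, -3/2}. C m * exp (- m * x))"
proof -
  have "continuous_on {0<..} (\<lambda>x. g x * sinh x)"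
    using assms by (auto simp: is_P2_green_profile_def intro!: continuous_intros)
  then obtain C where "\<And>x. 0 < x \<Longrightarrow>
      g x * sinh x = (\<Sum>m\<in>set [1/2, -1/2, 3/2, -3/2]. C m * exp (- m * x))"
    using weak_solution_deriv_shifts_is_exp_sum[of "[1/2, -1/2, 3/2, -3/2]" "\<lambda>x. g x * sinh x"]
      green_profile_weak_equation[OF assms]
    by (auto simp: P2_conj_def mult.assoc)
  with that show ?thesis
    by simp
qed

lemma green_profile_decaying_form:
  assumes G: "is_P2_green_profile g"
  obtains \<alpha> \<beta> where "\<And>x. 0 < x \<Longrightarrow> g x * sinh x = \<alpha> * exp (- x / 2) + \<beta> * exp (- 3 * x / 2)"
proof -
  obtain C where C: "\<And>x. 0 < x \<Longrightarrow> g x * sinh x = (\<Sum>m\<in>{1/2, -1/2, 3/2, -3/2}. C m * exp (- m * x))"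
    using green_profile_exp_sum[OF G] by blast
  define U where "U x = C (1/2) * exp (- 1/2 * x) + C (- 1/2) * exp (1/2 * x)
    + C (3/2) * exp (- 3/2 * x) + C (- 3/2) * exp (3/2 * x)" for x
  have gU: "g x * sinh x = U x" if "0 < x" for x
    using C[OF that] by (simp add: U_def algebra_simps)
  have U_cont: "continuous_on {1..} U"
    unfolding U_def by (intro continuous_intros) auto
  have "(\<lambda>r. (g r * sinh r)\<^sup>2) integrable_on {1..}"
    using G by (simp add: is_P2_green_profile_def power_mult_distrib)
  then have U_square: "(\<lambda>r. (U r)\<^sup>2) integrable_on {1..}"
    by (rule integrable_eq) (simp add: gU)
  have exp_mult: "exp (a * r) * exp (b * r) = exp ((a + b) * r)" for a b r :: real
    by (simp add: distrib_right exp_add)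
  have decay: "((\<lambda>r. c * exp (- k * r)) \<longlongrightarrow> 0) at_top" if "0 < k" for c k :: real
    by (rule tendsto_mult_right_zero[OF tendsto_exp_neg_mult_at_top[OF that]])
  have "U r * exp (- 3/2 * r)
      = C (1/2) * exp (- 2 * r) + C (- 1/2) * exp (- 1 * r) + C (3/2) * exp (- 3 * r) + C (- 3/2)"
    for r
    by (simp only: U_def distrib_right mult.assoc exp_mult) simp
  moreover have "((\<lambda>r. C (1/2) * exp (- 2 * r) + C (- 1/2) * exp (- 1 * r) + C (3/2) * exp (- 3 * r)
      + C (- 3/2)) \<longlongrightarrow> 0 + 0 + 0 + C (- 3/2)) at_top"
    by (intro tendsto_add decay tendsto_const) simp_all
  ultimately have "C (- 3/2) = 0"
    by (intro square_integrable_exp_limit_0[OF U_cont U_square, of "3/2"]) simp_all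
  have "U r * exp (- 1/2 * r)
      = C (1/2) * exp (- 1 * r) + C (- 1/2) + C (3/2) * exp (- 2 * r) + C (- 3/2) * exp r"
    for r
    by (simp only: U_def distrib_right mult.assoc exp_mult) simp
  moreover have "((\<lambda>r. C (1/2) * exp (- 1 * r) + C (- 1/2) + C (3/2) * exp (- 2 * r)
      + C (- 3/2) * exp r) \<longlongrightarrow> 0 + C (- 1/2) + 0 + 0) at_top"
    using \<open>C (- 3/2) = 0\<close> by (intro tendsto_add decay tendsto_const) simp_all
  ultimately have "C (- 1/2) = 0"
    by (intro square_integrable_exp_limit_0[OF U_cont U_square, of "1/2"]) simp_all
  with \<open>C (- 3/2) = 0\<close> show ?thesis
    using that[of "C (1/2)" "C (3/2)"] gU by (simp add: U_def)
qed

lemma green_profile_boundary_identity: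
  assumes G: "is_P2_green_profile g"
    and form: "\<And>x. 0 < x \<Longrightarrow> g x * sinh x = \<alpha> * exp (- x / 2) + \<beta> * exp (- 3 * x / 2)"
    and \<psi>: "radial_test \<psi>" "supported_on (- 1) 1 \<psi>"
  shows "4 * pi * (\<alpha> * (5/4 * \<psi> 0 - 3 * deriv (deriv \<psi>) 0)
      - \<beta> * (3/4 * \<psi> 0 + 3 * deriv (deriv \<psi>) 0)) = \<psi> 0"
proof -
  have smooth: "smooth_on UNIV \<psi>" and even: "\<And>r. \<psi> (- r) = \<psi> r"
    using \<psi>(1) by (auto simp: radial_test_iff)
  define v where "v = (\<lambda>x. \<psi> x * sinh x)"
  have v: "smooth_on UNIV v" "supported_on (- 1) 1 v"
    using smooth \<psi>(2) by (auto simp: v_def supported_on_def intro!: smooth_on_mult smooth_on_sinh)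
  have Pv: "smooth_on UNIV (P2_conj v)" "supported_on (- 1) 1 (P2_conj v)"
    unfolding P2_conj_def by (rule smooth_on_deriv_shifts[OF v(1)], rule supported_on_deriv_shifts[OF v(2)])
  define H where "H r = 4 * pi * (\<alpha> * (P2_conj v r * exp (- (1/2) * r))
    + \<beta> * (P2_conj v r * exp (- (3/2) * r)))" for r
  have "g r * P2_rad \<psi> r * (4 * pi * (sinh r)\<^sup>2) = H r" if "r \<in> {0<..}" for r
  proof -
    have "g r * P2_rad \<psi> r * (4 * pi * (sinh r)\<^sup>2) = 4 * pi * (g r * sinh r) * (P2_rad \<psi> r * sinh r)"
      by (simp add: power2_eq_square ac_simps)
    also have "\<dots> = 4 * pi * (\<alpha> * exp (- r / 2) + \<beta> * exp (- 3 * r / 2)) * P2_conj v r"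
      using form[of r] P2_rad_mult_sinh[OF smooth, of r] that by (simp add: v_def)
    finally show ?thesis
      by (simp add: H_def algebra_simps)
  qed
  then have "integral {0<..} (\<lambda>r. g r * P2_rad \<psi> r * (4 * pi * (sinh r)\<^sup>2)) = integral {0<..} H"
    by (rule integral_cong)
  then have "\<psi> 0 = integral {0<..} H"
    using G \<psi>(1) by (simp add: is_P2_green_profile_def)
  also have "\<dots> = integral {0..1} H"
    using Pv(2) by (intro integral_greaterThan_eq_atLeastAtMost) (simp add: H_def supported_on_def)
  also have "\<dots> = 4 * pi * (\<alpha> * integral {0..1} (\<lambda>x. P2_conj v x * exp (- (1/2) * x))
      + \<beta> * integral {0..1} (\<lambda>x. P2_conj v x * exp (- (3/2) * x)))"
    unfolding H_def using smooth_on_continuous_on[OF Pv(1)]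
    by (simp add: integral_add integral_mult_right integrable_continuous_interval continuous_intros)
  also have "integral {0..1} (\<lambda>x. P2_conj v x * exp (- (1/2) * x))
      = 9/4 * deriv v 0 - deriv (deriv (deriv v)) 0 - 1/2 * (deriv (deriv v) 0 - 9/4 * v 0)"
    using integral_deriv_shifts_pair_mult_exp[OF v, of "1/2" "3/2"]
    by (simp add: P2_conj_def power2_eq_square)
  also have "integral {0..1} (\<lambda>x. P2_conj v x * exp (- (3/2) * x))
      = 1/4 * deriv v 0 - deriv (deriv (deriv v)) 0 - 3/2 * (deriv (deriv v) 0 - 1/4 * v 0)"
    using integral_deriv_shifts_pair_mult_exp[OF v, of "3/2" "1/2"]
    by (simp add: P2_conj_factors_swapped v(1) power2_eq_square)
  finally have "\<psi> 0 = 4 * pi * (\<alpha> * (9/4 * deriv v 0 - deriv (deriv (deriv v)) 0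
      - 1/2 * (deriv (deriv v) 0 - 9/4 * v 0)) + \<beta> * (1/4 * deriv v 0
      - deriv (deriv (deriv v)) 0 - 3/2 * (deriv (deriv v) 0 - 1/4 * v 0)))" .
  moreover have "v 0 = 0" "deriv v 0 = \<psi> 0" "deriv (deriv v) 0 = 0"
    "deriv (deriv (deriv v)) 0 = 3 * deriv (deriv \<psi>) 0 + \<psi> 0"
    using mult_sinh_derivs_at_0[OF smooth] deriv_even_at_0[OF even smooth_on_differentiable[OF smooth]]
    by (simp_all add: v_def)
  ultimately show ?thesis
    by (simp add: algebra_simps)
qed

lemma radial_test_bump: "radial_test (bump 0 1)" "supported_on (- 1) 1 (bump 0 1)"
proof -
  show supp: "supported_on (- 1) 1 (bump 0 1)"
    using supported_on_bump[of 0 1] by simp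
  have "bump 0 1 r = 0" if "1 < \<bar>r\<bar>" for r
    using supp that by (cases "0 \<le> r") (auto simp: supported_on_def)
  moreover have "bump 0 1 (- r) = bump 0 1 r" for r
    by (simp add: bump_def add.commute)
  ultimately show "radial_test (bump 0 1)"
    using smooth_on_bump unfolding radial_test_iff by blast
qed

lemma radial_test_mult_square:
  assumes "radial_test b"
  shows "radial_test (\<lambda>r. r\<^sup>2 * b r)" "deriv (deriv (\<lambda>r. r\<^sup>2 * b r)) 0 = 2 * b 0"
proof -
  have b: "smooth_on UNIV b"
    using assms by (simp add: radial_test_iff)
  have "smooth_on UNIV (\<lambda>r. r\<^sup>2 * b r)"
    unfolding power2_eq_square by (intro smooth_on_mult smooth_on_ident b) auto
  then show "radial_test (\<lambda>r. r\<^sup>2 * b r)"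
    using assms unfolding radial_test_iff by auto
  have D: "(b has_real_derivative deriv b x) (at x)" "(deriv b has_real_derivative deriv (deriv b) x) (at x)"
    for x using b by (auto intro!: smooth_on_has_real_derivative smooth_on_deriv)
  have "deriv (\<lambda>r. r\<^sup>2 * b r) = (\<lambda>r. 2 * r * b r + r\<^sup>2 * deriv b r)"
    using D by (intro ext DERIV_imp_deriv) (auto intro!: derivative_eq_intros)
  then show "deriv (deriv (\<lambda>r. r\<^sup>2 * b r)) 0 = 2 * b 0"
    using D by (auto intro!: DERIV_imp_deriv derivative_eq_intros)
qed

lemma exp_half_diff_div_sinh:
  fixes x :: real
  assumes "0 < x"
  shows "(exp (- x / 2) - exp (- 3 * x / 2)) / sinh x = 2 / (exp (3/2 * x) + exp (x / 2))"
proof -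
  have "(exp (- x / 2) - exp (- 3 * x / 2)) * (exp (3/2 * x) + exp (x / 2)) = 2 * sinh x"
    by (simp add: sinh_def algebra_simps flip: exp_add)
  moreover have "0 < sinh x" "0 < exp (3/2 * x) + exp (x / 2)"
    using assms by (auto intro: add_pos_pos)
  ultimately show ?thesis
    by (simp add: field_simps)
qed

theorem green_profile_closed_form:
  assumes G: "is_P2_green_profile g" and "0 < x"
  shows "g x = 1 / (4 * pi * (exp (3/2 * x) + exp (x / 2)))"
proof -
  obtain \<alpha> \<beta> where form: "\<And>x. 0 < x \<Longrightarrow> g x * sinh x = \<alpha> * exp (- x / 2) + \<beta> * exp (- 3 * x / 2)"
    using green_profile_decaying_form[OF G] by blast
  define b where "b = bump 0 1"
  have b: "radial_test b" "supported_on (- 1) 1 b" "0 < b 0"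
    using radial_test_bump bump_pos[of 0 1 0] by (simp_all add: b_def)
  define c where "c = (\<lambda>r. r\<^sup>2 * b r)"
  have c: "radial_test c" "supported_on (- 1) 1 c" "deriv (deriv c) 0 = 2 * b 0"
    using radial_test_mult_square[OF b(1)] b(2) by (simp_all add: c_def supported_on_def)
  have "4 * pi * (\<alpha> * (5/4 * c 0 - 3 * deriv (deriv c) 0) - \<beta> * (3/4 * c 0 + 3 * deriv (deriv c) 0))
      = c 0"
    by (rule green_profile_boundary_identity[OF G form c(1,2)])
  then have "4 * pi * (\<alpha> * (5/4 * 0 - 3 * (2 * b 0)) - \<beta> * (3/4 * 0 + 3 * (2 * b 0))) = 0"
    unfolding c(3) by (simp add: c_def)
  then have "(24 * pi * b 0) * (\<alpha> + \<beta>) = 0"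
    by (simp add: algebra_simps)
  then have \<beta>: "\<beta> = - \<alpha>"
    using b(3) by simp
  from green_profile_boundary_identity[OF G form b(1,2)]
  have "(8 * pi * \<alpha>) * b 0 = 1 * b 0"
    unfolding \<beta> by (simp add: algebra_simps)
  then have "\<alpha> = 1 / (8 * pi)"
    using b(3) by (simp add: field_simps)
  have "g x = (\<alpha> * exp (- x / 2) + \<beta> * exp (- 3 * x / 2)) / sinh x"
    using form[OF \<open>0 < x\<close>] \<open>0 < x\<close> by (simp add: field_simps)
  also have "\<dots> = \<alpha> * ((exp (- x / 2) - exp (- 3 * x / 2)) / sinh x)"
    by (simp add: \<beta> algebra_simps diff_divide_distrib)
  also have "\<dots> = 1 / (8 * pi) * (2 / (exp (3/2 * x) + exp (x / 2)))"
    by (simp only: exp_half_diff_div_sinh[OF \<open>0 < x\<close>] \<open>\<alpha> = 1 / (8 * pi)\<close>)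
  finally show ?thesis
    by simp
qed

theorem mainTheorem4:
  fixes g :: "real \<Rightarrow> real"
  assumes "is_P2_green_profile g"
  shows "(\<forall>r>0. g r > 0) \<and> (\<forall>r s. 0 < r \<longrightarrow> r < s \<longrightarrow> g s < g r)"
proof -
  define D where "D r = 4 * pi * (exp (3/2 * r) + exp (r / 2))" for r
  have g: "g r = 1 / D r" if "0 < r" for r
    unfolding D_def by (rule green_profile_closed_form[OF assms that])
  have "0 < D r" for r
    by (simp add: D_def add_pos_pos)
  moreover have "D r < D s" if "r < s" for r s
    using that by (simp add: D_def add_strict_mono)
  ultimately show ?thesis
    using g by (auto intro!: divide_strict_left_mono mult_pos_pos)
qed

end
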